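(* Consider a single cell $K_e$ of the mesh, on which the finite element approximation is $u_h|_{K_e}=\sum_{j\in\mathcal N_e}u_j\varphi_j$ with coefficients $u_j\in\mathbb R^m$, and assume no facet of $K_e$ lies on a non-periodic boundary. Let $\mathcal G\subset\mathbb R^m$ be convex and assume $u_j\in\mathcal G$ for all $j\in\mathcal N_e$. Let $s$, $m_0^e$, $u_0^e$ be as defined in the context (so $u_0^e\in\mathcal G$), and for each $i\in\mathcal N_e^\partial$ let $\lambda_{0i}^e>0$ be such that the one-dimensional bar state $$\bar u_{0i}^e=\frac{u_i+u_0^e}{2}-\frac{(\mathbf f(u_i)-\mathbf f(u_0^e))\,\mathbf n_{i,e}}{2\lambda_{0i}^e}$$ belongs to $\mathcal G$. Define the intermediate cell average $$\bar u^e=u^e-\frac{\Delta t_e}{|K_e|}\int_{\partial K_e}\mathbf f_h\,\mathbf n\,\mathrm ds ,\qquad \mathbf f_h=\sum_{j\in\mathcal N_e}\mathbf f(u_j)\varphi_j,$$ with a parameter $\Delta t_e>0$. If $$\Delta t_e\le \Delta t_e^{\max}:=\frac1s\min\left\{\min_{i\in\mathcal N_e^\partial}\frac{m_i^e}{|\mathbf c_{i,e}|\lambda_{0i}^e},\ \frac{m_0^e}{\sum_{i\in\mathcal N_e^\partial}|\mathbf c_{i,e}|\lambda_{0i}^e}\right\},$$ then $\bar u^e\in\mathcal G$.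
   Context: Setting: $\Omega\subset\mathbb R^d$, a conforming mesh of cells $K_e$ (simplices or boxes), and a hyperbolic conservation law $\partial_t u+\nabla\cdot\mathbf f(u)=0$ with unknown $u\in\mathbb R^m$ and flux $\mathbf f:\mathbb R^m\to\mathbb R^{m\times d}$; for a vector $\mathbf n\in\mathbb R^d$, $\mathbf f(u)\mathbf n$ denotes the normal flux. The continuous finite element space of degree $p$ uses the Bernstein basis $\varphi_j$ (globally continuous, nonnegative, partition of unity). $\mathcal N_e$ is the set of global indices $j$ of basis functions supported on $K_e$; $\sum_{j\in\mathcal N_e}\varphi_j\equiv1$ on $K_e$. $\mathcal N_e^\partial=\{i\in\mathcal N_e: \mathbf x_i\in\partial K_e\}$ (nodes on the cell boundary) and $\mathcal N_e^0=\mathcal N_e\setminus\mathcal N_e^\partial$; for $i\in\mathcal N_e^0$, $\varphi_i$ vanishes on $\partial K_e$. $m_i^e=\int_{K_e}\varphi_i\,\mathrm d\mathbf x>0$, $|K_e|$ is the volume of $K_e$, and $u^e=\frac1{|K_e|}\sum_{i\in\mathcal N_e}m_i^eu_i$ is the cell average. $\mathbf n$ is the unit outward normal of $K_e$, $\mathbf c_{i,e}=\int_{\partial K_e}\varphi_i\mathbf n\,\mathrm ds$ (assumed nonzero for $i\in\mathcal N_e^\partial$), and $\mathbf n_{i,e}=\mathbf c_{i,e}/|\mathbf c_{i,e}|$. If $\mathcal N_e^0\neq\emptyset$: $s=1$, $m_0^e=\sum_{i\in\mathcal N_e^0}m_i^e$, $u_0^e=\frac1{m_0^e}\sum_{i\in\mathcal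 N_e^0}m_i^eu_i$. If $\mathcal N_e^0=\emptyset$: $s=2$, $m_0^e=|K_e|$, $u_0^e=u^e$. *)

theory Defs
  imports "HOL-Analysis.Analysis"
begin

text \<open>N   : global indices of basis functions supported on K_e (\<N>_e)
  Nb  : boundary nodes (\<N>_e^\<partial>); N - Nb are the interior nodes (\<N>_e^0)
  m i : m_i^e = integral over K_e of phi_i
  c i : c_{i,e} = boundary integral of phi_i n
  vol : |K_e|
  The geometric facts of the continuous Bernstein FE setting that are used are recorded
  as hypotheses in cell_geometry.\<close>

definition cell_geometry ::
  "'i set \<Rightarrow> 'i set \<Rightarrow> ('i \<Rightarrow> real) \<Rightarrow> ('i \<Rightarrow> real^'d) \<Rightarrow> real \<Rightarrow> bool" where
  "cell_geometry N Nb m c vol \<longleftrightarrow>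
     finite N \<and> Nb \<subseteq> N \<and> Nb \<noteq> {} \<and>
     (\<forall>i\<in>N. m i > 0) \<and>
     vol = (\<Sum>i\<in>N. m i) \<and>
     (\<forall>i\<in>N - Nb. c i = 0) \<and>
     (\<forall>i\<in>Nb. c i \<noteq> 0) \<and>
     (\<Sum>i\<in>N. c i) = 0"

definition cell_avg :: "'i set \<Rightarrow> ('i \<Rightarrow> real) \<Rightarrow> real \<Rightarrow> ('i \<Rightarrow> real^'m) \<Rightarrow> real^'m" where
  "cell_avg N m vol u = (1 / vol) *\<^sub>R (\<Sum>i\<in>N. m i *\<^sub>R u i)"

definition s_e :: "'i set \<Rightarrow> 'i set \<Rightarrow> real" where
  "s_e N Nb = (if N - Nb \<noteq> {} then 1 else 2)"

definition m0_e :: "'i set \<Rightarrow> 'i set \<Rightarrow> ('i \<Rightarrow> real) \<Rightarrow> real \<Rightarrow> real" where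
  "m0_e N Nb m vol = (if N - Nb \<noteq> {} then (\<Sum>i\<in>N - Nb. m i) else vol)"

definition u0_e :: "'i set \<Rightarrow> 'i set \<Rightarrow> ('i \<Rightarrow> real) \<Rightarrow> real \<Rightarrow> ('i \<Rightarrow> real^'m) \<Rightarrow> real^'m" where
  "u0_e N Nb m vol u =
     (if N - Nb \<noteq> {}
      then (1 / m0_e N Nb m vol) *\<^sub>R (\<Sum>i\<in>N - Nb. m i *\<^sub>R u i)
      else cell_avg N m vol u)"

definition nvec :: "real^'d \<Rightarrow> real^'d" where
  "nvec v = (1 / norm v) *\<^sub>R v"

text \<open>one-dimensional bar state; f u is the m x d flux matrix, f u *v n the normal flux\<close>
definition bar_state ::
  "(real^'m \<Rightarrow> real^'d^'m) \<Rightarrow> real^'m \<Rightarrow> real^'m \<Rightarrow> real^'d \<Rightarrow> real \<Rightarrow> real^'m" where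
  "bar_state f ui u0 n lam = (1/2) *\<^sub>R (ui + u0) - (1 / (2 * lam)) *\<^sub>R ((f ui - f u0) *v n)"

text \<open>boundary integral of f_h n with f_h = sum_j f(u_j) phi_j: by linearity it equals
  sum_j f(u_j) c_{j,e}\<close>
definition bdry_flux :: "'i set \<Rightarrow> (real^'m \<Rightarrow> real^'d^'m) \<Rightarrow> ('i \<Rightarrow> real^'m) \<Rightarrow> ('i \<Rightarrow> real^'d) \<Rightarrow> real^'m" where
  "bdry_flux N f u c = (\<Sum>j\<in>N. f (u j) *v c j)"

definition ubar_e ::
  "'i set \<Rightarrow> ('i \<Rightarrow> real) \<Rightarrow> ('i \<Rightarrow> real^'d) \<Rightarrow> real \<Rightarrow> (real^'m \<Rightarrow> real^'d^'m) \<Rightarrow> ('i \<Rightarrow> real^'m) \<Rightarrow> real \<Rightarrow> real^'m" where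
  "ubar_e N m c vol f u dt = cell_avg N m vol u - (dt / vol) *\<^sub>R bdry_flux N f u c"

definition dt_max ::
  "'i set \<Rightarrow> 'i set \<Rightarrow> ('i \<Rightarrow> real) \<Rightarrow> ('i \<Rightarrow> real^'d) \<Rightarrow> real \<Rightarrow> ('i \<Rightarrow> real) \<Rightarrow> real" where
  "dt_max N Nb m c vol lam =
     (1 / s_e N Nb) * min (Min ((\<lambda>i. m i / (norm (c i) * lam i)) ` Nb))
                          (m0_e N Nb m vol / (\<Sum>i\<in>Nb. norm (c i) * lam i))"

end

theory Submission
  imports Defs
begin

text \<open>
  Since the c_i sum to zero, the boundary flux equals the sum over boundary nodes of
  (f(u_i) - f(u_0)) c_i, and by the definition of the bar state each term is
  |c_i| lam_i (u_i + u_0 - 2 bar u_0i). Splitting the mass sum_j m_j u_j into the boundary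
  part (weights m_i / s) and u_0 (weight m_0 / s) then writes |K_e| bar u^e as a combination
  of the u_i, u_0 and the bar states whose weights add up to |K_e|. The time step restriction
  is exactly the nonnegativity of these weights, so convexity of G finishes the proof.
\<close>

lemma convex_weighted_mean_mem:
  fixes x :: "'i \<Rightarrow> 'a::real_vector"
  assumes "convex G" "finite S" "S \<noteq> {}"
    and "\<forall>i\<in>S. 0 < w i" "\<forall>i\<in>S. x i \<in> G"
  shows "(1 / sum w S) *\<^sub>R (\<Sum>i\<in>S. w i *\<^sub>R x i) \<in> G"
proof -
  have "0 < sum w S" using assms(2-4) by (simp add: sum_pos)
  then have "(\<Sum>i\<in>S. (w i / sum w S) *\<^sub>R x i) \<in> G"
    using assms by (intro convex_sum) (auto simp flip: sum_divide_distrib)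
  then show ?thesis by (simp add: scaleR_sum_right)
qed

lemma convex_combination_mem:
  fixes x0 :: "'a::real_vector" and S :: "'i set"
  assumes "convex G" "finite S" "0 < W"
    and "W = w0 + sum v S + sum w S"
    and "0 \<le> w0" "\<forall>i\<in>S. 0 \<le> v i \<and> 0 \<le> w i"
    and "x0 \<in> G" "\<forall>i\<in>S. x i \<in> G \<and> y i \<in> G"
  shows "(1 / W) *\<^sub>R (w0 *\<^sub>R x0 + (\<Sum>i\<in>S. v i *\<^sub>R x i + w i *\<^sub>R y i)) \<in> G"
proof -
  define I :: "(unit + ('i + 'i)) set" where "I = {()} <+> (S <+> S)"
  define a :: "unit + ('i + 'i) \<Rightarrow> real"
    where "a = case_sum (\<lambda>_. w0 / W) (case_sum (\<lambda>i. v i / W) (\<lambda>i. w i / W))"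
  define z :: "unit + ('i + 'i) \<Rightarrow> 'a" where "z = case_sum (\<lambda>_. x0) (case_sum x y)"
  have "(\<Sum>k\<in>I. a k *\<^sub>R z k) \<in> G"
  proof (rule convex_sum[OF _ assms(1)])
    show "finite I" using assms(2) by (simp add: I_def)
    have "sum a I = (w0 + sum v S + sum w S) / W"
      using assms(2) by (simp add: I_def a_def sum.Plus add_divide_distrib flip: sum_divide_distrib)
    then show "sum a I = 1"
      using assms(3,4) by simp
    show "0 \<le> a k" if "k \<in> I" for k
      using that assms(3,5,6) by (auto simp: I_def a_def)
    show "z k \<in> G" if "k \<in> I" for k
      using that assms(7,8) by (auto simp: I_def z_def)
  qed
  then show ?thesis
    using assms(2) by (simp add: I_def a_def z_def sum.Plus sum.distrib scaleR_sum_right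
        scaleR_add_right divide_inverse mult.commute)
qed

lemma cell_geometry_vol_pos:
  assumes "cell_geometry N Nb m c vol"
  shows "0 < vol"
  using assms unfolding cell_geometry_def by (metis subset_empty sum_pos)

lemma u0_e_mem:
  assumes geom: "cell_geometry N Nb m c vol" and "convex G" and "\<forall>j\<in>N. u j \<in> G"
  shows "u0_e N Nb m vol u \<in> G"
proof (cases "N - Nb = {}")
  case True
  have "N \<noteq> {}" and "vol = sum m N" and "finite N" and "\<forall>i\<in>N. 0 < m i"
    using geom unfolding cell_geometry_def by auto
  then show ?thesis
    using True assms(2,3) convex_weighted_mean_mem[of G N m u]
    by (simp add: u0_e_def cell_avg_def)
next
  case False
  have "finite (N - Nb)" and "\<forall>i\<in>N - Nb. 0 < m i"
    using geom unfolding cell_geometry_def by auto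
  then show ?thesis
    using False assms(2,3) convex_weighted_mean_mem[of G "N - Nb" m u]
    by (simp add: u0_e_def m0_e_def)
qed

lemma bar_state_flux_difference:
  fixes f :: "real^'m \<Rightarrow> real^'d^'m"
  assumes "c \<noteq> 0" "lam \<noteq> 0"
  shows "(f ui - f u0) *v c = (norm c * lam) *\<^sub>R (ui + u0 - 2 *\<^sub>R bar_state f ui u0 (nvec c) lam)"
proof -
  have "ui + u0 - 2 *\<^sub>R bar_state f ui u0 (nvec c) lam = (1 / lam) *\<^sub>R ((f ui - f u0) *v nvec c)"
    by (simp add: bar_state_def algebra_simps)
  moreover have "(f ui - f u0) *v c = norm c *\<^sub>R ((f ui - f u0) *v nvec c)"
    using assms(1) by (simp add: nvec_def matrix_vector_mult_scaleR)
  ultimately show ?thesis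
    using assms(2) by simp
qed

lemma bdry_flux_eq_boundary_sum:
  assumes geom: "cell_geometry N Nb m c vol"
  shows "bdry_flux N f u c = (\<Sum>i\<in>Nb. (f (u i) - F) *v c i)"
proof -
  have finN: "finite N" and sub: "Nb \<subseteq> N" and c0: "\<forall>i\<in>N - Nb. c i = 0"
    and csum: "(\<Sum>i\<in>N. c i) = 0"
    using geom unfolding cell_geometry_def by auto
  have "(\<Sum>i\<in>Nb. F *v c i) = F *v (\<Sum>i\<in>Nb. c i)"
    by (simp add: vec.sum)
  also have "\<dots> = F *v (\<Sum>i\<in>N. c i)"
    using c0 by (simp add: sum.mono_neutral_left[OF finN sub])
  finally have "(\<Sum>i\<in>Nb. F *v c i) = 0"
    using csum by simp
  moreover have "bdry_flux N f u c = (\<Sum>i\<in>Nb. f (u i) *v c i)"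
    unfolding bdry_flux_def using c0 by (intro sum.mono_neutral_right[OF finN sub]) auto
  ultimately show ?thesis
    by (simp add: matrix_vector_mult_diff_rdistrib sum_subtractf)
qed

lemma cell_mass_split:
  assumes geom: "cell_geometry N Nb m c vol"
  shows "(\<Sum>i\<in>N. m i *\<^sub>R u i) = (\<Sum>i\<in>Nb. (m i / s_e N Nb) *\<^sub>R u i)
           + (m0_e N Nb m vol / s_e N Nb) *\<^sub>R u0_e N Nb m vol u"
proof (cases "N - Nb = {}")
  case True
  have "N = Nb" using True geom unfolding cell_geometry_def by auto
  moreover have "0 < vol" using geom by (rule cell_geometry_vol_pos)
  moreover have "(\<Sum>i\<in>Nb. (m i / 2) *\<^sub>R u i) = (1 / 2) *\<^sub>R (\<Sum>i\<in>Nb. m i *\<^sub>R u i)"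
    by (simp add: scaleR_sum_right)
  ultimately show ?thesis
    using True by (simp add: s_e_def m0_e_def u0_e_def cell_avg_def flip: scaleR_add_left)
next
  case False
  have finN: "finite N" and sub: "Nb \<subseteq> N" and "\<forall>i\<in>N - Nb. 0 < m i"
    using geom unfolding cell_geometry_def by auto
  then have "0 < (\<Sum>i\<in>N - Nb. m i)"
    using False by (intro sum_pos) auto
  then show ?thesis
    using False sum.subset_diff[OF sub finN, of "\<lambda>i. m i *\<^sub>R u i"]
    by (simp add: s_e_def m0_e_def u0_e_def add.commute)
qed

lemma cell_volume_split:
  assumes geom: "cell_geometry N Nb m c vol"
  shows "(\<Sum>i\<in>Nb. m i / s_e N Nb) + m0_e N Nb m vol / s_e N Nb = vol"
proof -
  have finN: "finite N" and sub: "Nb \<subseteq> N" and vol: "vol = sum m N"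
    using geom unfolding cell_geometry_def by auto
  show ?thesis
  proof (cases "N - Nb = {}")
    case True
    then have "N = Nb" using sub by auto
    then show ?thesis
      using True vol by (simp add: s_e_def m0_e_def flip: sum_divide_distrib)
  next
    case False
    then show ?thesis
      using vol sum.subset_diff[OF sub finN, of m] by (simp add: s_e_def m0_e_def)
  qed
qed

lemma ubar_e_decomposition:
  fixes f :: "real^'m \<Rightarrow> real^'d^'m" and u :: "'i \<Rightarrow> real^'m"
  assumes geom: "cell_geometry N Nb m c vol" and lam: "\<forall>i\<in>Nb. lam i \<noteq> 0"
  defines "s \<equiv> s_e N Nb" and "m0 \<equiv> m0_e N Nb m vol" and "u0 \<equiv> u0_e N Nb m vol u"
    and "a \<equiv> \<lambda>i. norm (c i) * lam i"
    and "b \<equiv> \<lambda>i. bar_state f (u i) (u0_e N Nb m vol u) (nvec (c i)) (lam i)"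
  shows "ubar_e N m c vol f u dt =
           (1 / vol) *\<^sub>R ((m0 / s - dt * sum a Nb) *\<^sub>R u0
             + (\<Sum>i\<in>Nb. (m i / s - dt * a i) *\<^sub>R u i + (2 * dt * a i) *\<^sub>R b i))"
proof -
  have "\<forall>i\<in>Nb. c i \<noteq> 0"
    using geom unfolding cell_geometry_def by auto
  then have "\<forall>i\<in>Nb. (f (u i) - f u0) *v c i = a i *\<^sub>R (u i + u0 - 2 *\<^sub>R b i)"
    using lam by (simp add: a_def b_def u0_def bar_state_flux_difference)
  then have flux: "bdry_flux N f u c = (\<Sum>i\<in>Nb. a i *\<^sub>R (u i + u0 - 2 *\<^sub>R b i))"
    using bdry_flux_eq_boundary_sum[OF geom, of f u "f u0"] by simp
  have "ubar_e N m c vol f u dt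
          = (1 / vol) *\<^sub>R ((\<Sum>i\<in>N. m i *\<^sub>R u i) - dt *\<^sub>R bdry_flux N f u c)"
    by (simp add: ubar_e_def cell_avg_def scaleR_diff_right)
  also have "(\<Sum>i\<in>N. m i *\<^sub>R u i) - dt *\<^sub>R bdry_flux N f u c
        = (m0 / s - dt * sum a Nb) *\<^sub>R u0
          + (\<Sum>i\<in>Nb. (m i / s - dt * a i) *\<^sub>R u i + (2 * dt * a i) *\<^sub>R b i)"
    unfolding flux cell_mass_split[OF geom] s_def[symmetric] m0_def[symmetric] u0_def[symmetric]
    by (simp add: algebra_simps scaleR_sum_right scaleR_sum_left sum.distrib sum_subtractf
        sum_distrib_left)
  finally show ?thesis .
qed

lemma dt_max_node_bound:
  assumes "finite Nb" "i \<in> Nb" "0 < norm (c i) * lam i" "dt \<le> dt_max N Nb m c vol lam"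
  shows "dt * (norm (c i) * lam i) \<le> m i / s_e N Nb"
proof -
  define a where "a = norm (c i) * lam i"
  have "Min ((\<lambda>i. m i / (norm (c i) * lam i)) ` Nb) \<le> m i / a"
    using assms(1,2) by (simp add: a_def)
  then have "dt_max N Nb m c vol lam \<le> (1 / s_e N Nb) * (m i / a)"
    unfolding dt_max_def by (intro mult_left_mono min.coboundedI1) (auto simp: s_e_def)
  then have "dt * a \<le> (1 / s_e N Nb) * (m i / a) * a"
    using assms(3,4) by (intro mult_right_mono) (auto simp: a_def)
  then show ?thesis
    using assms(3) by (simp add: a_def[symmetric])
qed

lemma dt_max_total_bound:
  assumes "0 < (\<Sum>i\<in>Nb. norm (c i) * lam i)" "dt \<le> dt_max N Nb m c vol lam"
  shows "dt * (\<Sum>i\<in>Nb. norm (c i) * lam i) \<le> m0_e N Nb m vol / s_e N Nb"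
proof -
  define A where "A = (\<Sum>i\<in>Nb. norm (c i) * lam i)"
  have "dt_max N Nb m c vol lam \<le> (1 / s_e N Nb) * (m0_e N Nb m vol / A)"
    unfolding dt_max_def A_def by (intro mult_left_mono min.cobounded2) (auto simp: s_e_def)
  then have "dt * A \<le> (1 / s_e N Nb) * (m0_e N Nb m vol / A) * A"
    using assms by (intro mult_right_mono) (auto simp: A_def)
  then show ?thesis
    using assms(1) by (simp add: A_def[symmetric])
qed

lemma ubar_e_mem_if_cfl:
  fixes f :: "real^'m \<Rightarrow> real^'d^'m" and u :: "'i \<Rightarrow> real^'m"
  assumes geom: "cell_geometry N Nb m c vol" and convG: "convex G" and uG: "\<forall>j\<in>N. u j \<in> G"
    and lam_pos: "\<forall>i\<in>Nb. 0 < lam i"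
    and barG: "\<forall>i\<in>Nb. bar_state f (u i) (u0_e N Nb m vol u) (nvec (c i)) (lam i) \<in> G"
    and "0 \<le> dt"
  defines "s \<equiv> s_e N Nb" and "m0 \<equiv> m0_e N Nb m vol" and "a \<equiv> \<lambda>i. norm (c i) * lam i"
  assumes total: "dt * sum a Nb \<le> m0 / s" and node: "\<forall>i\<in>Nb. dt * a i \<le> m i / s"
  shows "ubar_e N m c vol f u dt \<in> G"
proof -
  have finNb: "finite Nb" and "Nb \<subseteq> N"
    using geom unfolding cell_geometry_def by (auto intro: finite_subset)
  have weights: "vol = (m0 / s - dt * sum a Nb) + (\<Sum>i\<in>Nb. m i / s - dt * a i)
                        + (\<Sum>i\<in>Nb. 2 * dt * a i)"
    using cell_volume_split[OF geom]
    by (simp add: s_def m0_def sum_subtractf sum.distrib flip: sum_distrib_left)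
  have "ubar_e N m c vol f u dt =
          (1 / vol) *\<^sub>R ((m0 / s - dt * sum a Nb) *\<^sub>R u0_e N Nb m vol u
            + (\<Sum>i\<in>Nb. (m i / s - dt * a i) *\<^sub>R u i
                 + (2 * dt * a i) *\<^sub>R bar_state f (u i) (u0_e N Nb m vol u) (nvec (c i)) (lam i)))"
    unfolding s_def m0_def a_def using lam_pos by (intro ubar_e_decomposition[OF geom]) auto
  also have "\<dots> \<in> G"
  proof (rule convex_combination_mem[OF convG finNb cell_geometry_vol_pos[OF geom] weights])
    show "0 \<le> m0 / s - dt * sum a Nb"
      using total by simp
    show "\<forall>i\<in>Nb. 0 \<le> m i / s - dt * a i \<and> 0 \<le> 2 * dt * a i"
      using node lam_pos \<open>0 \<le> dt\<close> by (simp add: a_def less_imp_le)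
    show "u0_e N Nb m vol u \<in> G"
      using geom convG uG by (rule u0_e_mem)
    show "\<forall>i\<in>Nb. u i \<in> G \<and> bar_state f (u i) (u0_e N Nb m vol u) (nvec (c i)) (lam i) \<in> G"
      using uG barG \<open>Nb \<subseteq> N\<close> by auto
  qed
  finally show ?thesis .
qed

theorem lemma1:
  fixes N Nb :: "'i set" and m :: "'i \<Rightarrow> real" and c :: "'i \<Rightarrow> real^'d" and vol :: real
    and f :: "real^'m \<Rightarrow> real^'d^'m" and u :: "'i \<Rightarrow> real^'m"
    and G :: "(real^'m) set" and lam :: "'i \<Rightarrow> real" and dt :: real
  assumes geom: "cell_geometry N Nb m c vol"
    and convG: "convex G"
    and uG: "\<forall>j\<in>N. u j \<in> G"
    and lam_pos: "\<forall>i\<in>Nb. lam i > 0"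
    and barG: "\<forall>i\<in>Nb. bar_state f (u i) (u0_e N Nb m vol u) (nvec (c i)) (lam i) \<in> G"
    and dt_pos: "dt > 0"
    and dt_le: "dt \<le> dt_max N Nb m c vol lam"
  shows "ubar_e N m c vol f u dt \<in> G"
proof (rule ubar_e_mem_if_cfl[OF geom convG uG lam_pos barG less_imp_le[OF dt_pos]])
  have finNb: "finite Nb" and "Nb \<noteq> {}" and "\<forall>i\<in>Nb. c i \<noteq> 0"
    using geom unfolding cell_geometry_def by (auto intro: finite_subset)
  then have node_pos: "\<forall>i\<in>Nb. 0 < norm (c i) * lam i"
    using lam_pos by simp
  then show "\<forall>i\<in>Nb. dt * (norm (c i) * lam i) \<le> m i / s_e N Nb"
    using dt_max_node_bound[OF finNb _ _ dt_le] by simp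
  have "0 < (\<Sum>i\<in>Nb. norm (c i) * lam i)"
    using node_pos finNb \<open>Nb \<noteq> {}\<close> by (simp add: sum_pos)
  then show "dt * (\<Sum>i\<in>Nb. norm (c i) * lam i) \<le> m0_e N Nb m vol / s_e N Nb"
    using dt_le by (rule dt_max_total_bound)
qed

end
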